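(* Let $m\ge 8$ and let $G^*$ be a $V_5$-free graph without isolated vertices having $m$ edges and maximum spectral radius among all such graphs. Let $u^*$ be a vertex at which a Perron vector of $G^*$ attains its maximum coordinate, and let $U=N(u^* )$, $W=V(G^* )\setminus (U\cup\{u^*\})$. If $W\neq\varnothing$, then $W$ is an independent set in $G^*$, i.e. $e(W)=0$.
   Context: $V_5=K_1\vee P_4$. A Perron vector is a positive eigenvector for the spectral radius of the (connected) graph $G^*$. $N(u)$ is the neighbourhood of $u$ and $e(X)$ the number of edges with both ends in $X$. *)

theory Defs
  imports Complex_Main
begin

definition simple_graph :: "'a set \<Rightarrow> ('a \<Rightarrow> 'a \<Rightarrow> bool) \<Rightarrow> bool" where
  "simple_graph V E \<longleftrightarrow> finite V \<and>
     (\<forall>u v. E u v \<longrightarrow> u \<in> V \<and> v \<in> V \<and> u \<noteq> v \<and> E v u)"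

definition nbhd :: "'a set \<Rightarrow> ('a \<Rightarrow> 'a \<Rightarrow> bool) \<Rightarrow> 'a \<Rightarrow> 'a set" where
  "nbhd V E u = {v \<in> V. E u v}"

definition num_edges :: "'a set \<Rightarrow> ('a \<Rightarrow> 'a \<Rightarrow> bool) \<Rightarrow> nat" where
  "num_edges X E = card {{u, v} | u v. u \<in> X \<and> v \<in> X \<and> E u v}"

definition no_isolated :: "'a set \<Rightarrow> ('a \<Rightarrow> 'a \<Rightarrow> bool) \<Rightarrow> bool" where
  "no_isolated V E \<longleftrightarrow> (\<forall>v \<in> V. \<exists>u \<in> V. E v u)"

definition contains_subgraph ::
  "'b set \<Rightarrow> ('b \<Rightarrow> 'b \<Rightarrow> bool) \<Rightarrow> 'a set \<Rightarrow> ('a \<Rightarrow> 'a \<Rightarrow> bool) \<Rightarrow> bool" where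
  "contains_subgraph VH EH V E \<longleftrightarrow>
     (\<exists>f. inj_on f VH \<and> f ` VH \<subseteq> V \<and> (\<forall>a \<in> VH. \<forall>b \<in> VH. EH a b \<longrightarrow> E (f a) (f b)))"

text \<open>V5 = K1 join P4: vertex 0 is the apex, 1-2-3-4 is the path.\<close>
definition V5_vertices :: "nat set" where "V5_vertices = {0..4}"

definition V5_adj :: "nat \<Rightarrow> nat \<Rightarrow> bool" where
  "V5_adj a b \<longleftrightarrow> a \<in> V5_vertices \<and> b \<in> V5_vertices \<and> a \<noteq> b \<and>
     (a = 0 \<or> b = 0 \<or> a = b + 1 \<or> b = a + 1)"

definition V5_free :: "'a set \<Rightarrow> ('a \<Rightarrow> 'a \<Rightarrow> bool) \<Rightarrow> bool" where
  "V5_free V E \<longleftrightarrow> \<not> contains_subgraph V5_vertices V5_adj V E"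

definition adj_eigenvalue :: "'a set \<Rightarrow> ('a \<Rightarrow> 'a \<Rightarrow> bool) \<Rightarrow> real \<Rightarrow> bool" where
  "adj_eigenvalue V E lam \<longleftrightarrow>
     (\<exists>x :: 'a \<Rightarrow> real. (\<exists>u \<in> V. x u \<noteq> 0) \<and>
        (\<forall>u \<in> V. (\<Sum>v \<in> nbhd V E u. x v) = lam * x u))"

definition spectral_radius :: "'a set \<Rightarrow> ('a \<Rightarrow> 'a \<Rightarrow> bool) \<Rightarrow> real" where
  "spectral_radius V E = Max {\<bar>lam\<bar> | lam. adj_eigenvalue V E lam}"

definition perron_vector :: "'a set \<Rightarrow> ('a \<Rightarrow> 'a \<Rightarrow> bool) \<Rightarrow> ('a \<Rightarrow> real) \<Rightarrow> bool" where
  "perron_vector V E x \<longleftrightarrow> (\<forall>u \<in> V. x u > 0) \<and>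
     (\<forall>u \<in> V. (\<Sum>v \<in> nbhd V E u. x v) = spectral_radius V E * x u)"

end

theory Submission
  imports Defs "Jordan_Normal_Form.Char_Poly"
begin

text \<open>Normalise the Perron vector so that \<open>y(u\<^sup>*) = 1\<close> and let \<open>r\<close> be the spectral radius.
  Expanding \<open>r\<^sup>2 = \<Sum>\<^sub>v\<^sub>\<in>\<^sub>U r y\<^sub>v\<close> with the eigen-equations on \<open>U\<close> and double counting gives
  \<open>r\<^sup>2 - r = e(G) - e(W) - P - T\<close>, where \<open>T = \<Sum>\<^sub>w\<^sub>\<in>\<^sub>W d\<^sub>U(w)(1 - y\<^sub>w) \<ge> 0\<close> and
  \<open>P = \<Sum>\<^sub>v\<^sub>\<in>\<^sub>U (d\<^sub>U(v)/2 - (d\<^sub>U(v) - 1) y\<^sub>v)\<close>. Since \<open>G\<close> is \<open>V\<^sub>5\<close>-free, \<open>G[U]\<close> is \<open>P\<^sub>4\<close>-free, and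
  this forces \<open>P \<ge> 0\<close>. Extremality, tested against the book \<open>K\<^sub>2 \<or> kK\<^sub>1\<close> (with a pendant edge
  when \<open>m\<close> is even), gives \<open>r\<^sup>2 - r > m - 3/2\<close> and \<open>r > 3\<close>. Hence \<open>e(W) \<le> 1\<close>, and if \<open>e(W) = 1\<close>
  then \<open>P + T < 1/2\<close>: \<open>G[U]\<close> consists of triangles and isolated vertices, \<open>y\<close> is close to \<open>1\<close>
  on the triangles and to \<open>0\<close> on the isolated vertices. The eigen-equations at the two ends of the edge in \<open>W\<close> then contradict
  \<open>r > 3\<close>, because a vertex of \<open>W\<close> sees at most one vertex of each triangle of \<open>U\<close>.\<close>

section \<open>Eigenvalues are bounded by the spectral radius\<close>

lemma adj_eigenvalue_imp_char_poly_root: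
  assumes "bij_betw f {0..<n} V" and "adj_eigenvalue V E lam"
  shows "poly (char_poly (mat n n (\<lambda>(i, j). if E (f i) (f j) then 1 else 0) :: real mat)) lam = 0"
    (is "poly (char_poly ?A) lam = 0")
proof -
  have A: "?A \<in> carrier_mat n n" by simp
  have "finite V" using assms(1) bij_betw_finite by blast
  obtain x where nz: "\<exists>u \<in> V. x u \<noteq> 0"
    and eq: "\<And>u. u \<in> V \<Longrightarrow> (\<Sum>v \<in> nbhd V E u. x v) = lam * x u"
    using assms(2) unfolding adj_eigenvalue_def by auto
  define v where "v = vec n (\<lambda>i. x (f i))"
  have v: "v \<in> carrier_vec n" unfolding v_def by simp
  have "v \<noteq> 0\<^sub>v n"
  proof
    assume "v = 0\<^sub>v n"
    then have "x (f i) = 0" if "i < n" for i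
      using that unfolding v_def by (metis index_vec index_zero_vec(1))
    with nz assms(1) show False by (metis atLeastLessThan_iff bij_betw_iff_bijections)
  qed
  moreover have "?A *\<^sub>v v = lam \<cdot>\<^sub>v v"
  proof (rule eq_vecI)
    fix i assume "i < dim_vec (lam \<cdot>\<^sub>v v)"
    then have i: "i < n" using v by simp
    have "(?A *\<^sub>v v) $ i = (\<Sum>j\<in>{0..<n}. (\<lambda>z. if E (f i) z then x z else 0) (f j))"
      using i unfolding v_def by (auto simp: scalar_prod_def intro: sum.cong)
    also have "\<dots> = (\<Sum>z\<in>V. if E (f i) z then x z else 0)"
      by (rule sum.reindex_bij_betw[OF assms(1)])
    also have "\<dots> = (\<Sum>z\<in>nbhd V E (f i). x z)"
      unfolding nbhd_def using \<open>finite V\<close> by (simp add: sum.inter_filter)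
    also have "\<dots> = lam * x (f i)"
      using eq i assms(1) by (simp add: bij_betw_apply)
    finally show "(?A *\<^sub>v v) $ i = (lam \<cdot>\<^sub>v v) $ i" using i unfolding v_def by simp
  qed (use v in simp)
  ultimately have "eigenvalue ?A lam"
    unfolding eigenvalue_def eigenvector_def using v A by auto
  then show ?thesis using eigenvalue_root_char_poly[OF A] by simp
qed

lemma finite_adj_eigenvalues:
  assumes "finite V"
  shows "finite {lam. adj_eigenvalue V E lam}"
proof -
  obtain f where f: "bij_betw f {0..<card V} V"
    using ex_bij_betw_nat_finite[OF assms] by blast
  define A :: "real mat" where
    "A = mat (card V) (card V) (\<lambda>(i, j). if E (f i) (f j) then 1 else 0)"
  have "char_poly A \<noteq> 0"
    using degree_monic_char_poly[of A "card V"] unfolding A_def by auto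
  moreover have "{lam. adj_eigenvalue V E lam} \<subseteq> {lam. poly (char_poly A) lam = 0}"
    using adj_eigenvalue_imp_char_poly_root[OF f] unfolding A_def by blast
  ultimately show ?thesis using poly_roots_finite finite_subset by blast
qed

lemma adj_eigenvalue_le_spectral_radius:
  assumes "finite V" and "adj_eigenvalue V E lam"
  shows "lam \<le> spectral_radius V E"
proof -
  have "finite {\<bar>lam\<bar> | lam. adj_eigenvalue V E lam}"
    using finite_adj_eigenvalues[OF assms(1), of E] by (simp add: setcompr_eq_image)
  then have "\<bar>lam\<bar> \<le> spectral_radius V E"
    unfolding spectral_radius_def using assms(2) by (intro Max_ge) auto
  then show ?thesis by simp
qed

context
  fixes V :: "'a set" and E :: "'a \<Rightarrow> 'a \<Rightarrow> bool"
  assumes sg: "simple_graph V E"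
begin

lemma simple_graph_finite: "finite V"
  using sg unfolding simple_graph_def by blast

lemma simple_graph_sym: "E u v \<Longrightarrow> E v u"
  using sg unfolding simple_graph_def by blast

lemma simple_graph_irrefl: "E u v \<Longrightarrow> u \<noteq> v"
  using sg unfolding simple_graph_def by blast

lemma simple_graph_edge_in: "E u v \<Longrightarrow> u \<in> V \<and> v \<in> V"
  using sg unfolding simple_graph_def by blast

lemma two_num_edges_eq_sum_degrees:
  assumes "X \<subseteq> V"
  shows "2 * num_edges X E = (\<Sum>v\<in>X. card {u\<in>X. E v u})"
proof -
  have fX: "finite X" using simple_graph_finite assms finite_subset by blast
  define P where "P = Sigma X (\<lambda>u. {v\<in>X. E u v})"
  define S where "S = {{u, v} | u v. u \<in> X \<and> v \<in> X \<and> E u v}"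
  have fP: "finite P" unfolding P_def using fX by simp
  have S: "S = (\<lambda>(a, b). {a, b}) ` P" unfolding S_def P_def by auto
  have two: "card {p\<in>P. (\<lambda>(a, b). {a, b}) p = e} = 2" if "e \<in> S" for e
  proof -
    obtain a b where ab: "e = {a, b}" "a \<in> X" "b \<in> X" "E a b"
      using \<open>e \<in> S\<close> unfolding S_def by blast
    then have "{p\<in>P. (\<lambda>(a, b). {a, b}) p = e} = {(a, b), (b, a)}"
      using simple_graph_sym unfolding P_def by (auto simp: doubleton_eq_iff)
    then show ?thesis using simple_graph_irrefl[OF ab(4)] by simp
  qed
  have "card P = (\<Sum>e\<in>S. \<Sum>p\<in>{p\<in>P. (\<lambda>(a, b). {a, b}) p = e}. 1)"
    using sum.group[OF fP _ equalityD2[OF S], of "\<lambda>_. 1 :: nat"] fP S by simp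
  also have "\<dots> = 2 * card S" using two by simp
  finally show ?thesis
    using card_SigmaI[OF fX, of "\<lambda>u. {v\<in>X. E u v}"] fX unfolding P_def S_def num_edges_def by simp
qed

lemma num_edges_eq_1_imp_isolated_edge:
  assumes "num_edges X E = 1"
  obtains a b where "a \<in> X" "b \<in> X" "E a b"
    "\<And>z. z \<in> X \<Longrightarrow> E a z \<Longrightarrow> z = b" "\<And>z. z \<in> X \<Longrightarrow> E b z \<Longrightarrow> z = a"
proof -
  define S where "S = {{u, v} | u v. u \<in> X \<and> v \<in> X \<and> E u v}"
  have "card S = 1" using assms unfolding num_edges_def S_def .
  then obtain e where Se: "S = {e}" by (rule card_1_singletonE)
  then have "e \<in> S" by simp
  then obtain a b where ab: "e = {a, b}" "a \<in> X" "b \<in> X" "E a b"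
    unfolding S_def by blast
  have partner: "z = c" if "z \<in> X" "E d z" "{c, d} = {a, b}" for c d z
  proof -
    have "d \<in> X" using that(3) ab(2,3) by (auto simp: doubleton_eq_iff)
    then have "{d, z} \<in> S" using that(1,2) unfolding S_def by blast
    then have "{d, z} = {c, d}" using Se ab(1) that(3) by simp
    then show "z = c" using simple_graph_irrefl[OF that(2)] by (auto simp: doubleton_eq_iff)
  qed
  show ?thesis
  proof (rule that[OF ab(2-4)])
    show "z = b" if "z \<in> X" "E a z" for z using partner[OF that, of b] by (simp add: insert_commute)
    show "z = a" if "z \<in> X" "E b z" for z using partner[OF that, of a] by simp
  qed
qed

end

lemma sum_nbhd_swap:
  fixes f :: "'a \<Rightarrow> real"
  assumes "finite A" and "finite B" and "\<And>a b. E a b \<Longrightarrow> E b a"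
  shows "(\<Sum>v\<in>A. \<Sum>z\<in>{z\<in>B. E v z}. f z) = (\<Sum>z\<in>B. real (card {v\<in>A. E z v}) * f z)"
proof -
  have "(\<Sum>v\<in>A. \<Sum>z\<in>{z\<in>B. E v z}. f z) = (\<Sum>z\<in>B. \<Sum>v\<in>A. if E v z then f z else 0)"
    using assms(2) by (simp add: sum.inter_filter sum.swap[of _ A])
  also have "\<dots> = (\<Sum>z\<in>B. real (card {v\<in>A. E z v}) * f z)"
  proof (rule sum.cong)
    fix z
    have "{v\<in>A. E v z} = {v\<in>A. E z v}" using assms(3) by blast
    then show "(\<Sum>v\<in>A. if E v z then f z else 0) = real (card {v\<in>A. E z v}) * f z"
      using assms(1) by (simp add: sum.If_cases Int_def)
  qed simp
  finally show ?thesis .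
qed

lemma V5_free_if_neighbourhood_edges_share_vertex:
  assumes "\<And>a. \<exists>h. \<forall>b c. E a b \<and> E a c \<and> E b c \<longrightarrow> b = h \<or> c = h"
  shows "V5_free V E"
  unfolding V5_free_def contains_subgraph_def
proof
  assume "\<exists>f. inj_on f V5_vertices \<and> f ` V5_vertices \<subseteq> V \<and>
       (\<forall>a\<in>V5_vertices. \<forall>b\<in>V5_vertices. V5_adj a b \<longrightarrow> E (f a) (f b))"
  then obtain f where inj: "inj_on f V5_vertices"
    and edges: "\<forall>a\<in>V5_vertices. \<forall>b\<in>V5_vertices. V5_adj a b \<longrightarrow> E (f a) (f b)" by blast
  have e: "E (f 0) (f 1)" "E (f 0) (f 2)" "E (f 0) (f 3)" "E (f 0) (f 4)"
      "E (f 1) (f 2)" "E (f 3) (f 4)"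
    using edges by (auto simp: V5_adj_def V5_vertices_def)
  obtain h where "\<forall>b c. E (f 0) b \<and> E (f 0) c \<and> E b c \<longrightarrow> b = h \<or> c = h"
    using assms by blast
  with e have "f 1 = h \<or> f 2 = h" and "f 3 = h \<or> f 4 = h" by blast+
  then show False by (auto simp: inj_on_eq_iff[OF inj] V5_vertices_def)
qed

lemma fan_imp_not_V5_free:
  assumes sg: "simple_graph V E" and "distinct [a0, a1, a2, a3, a4]"
    and "E a0 a1" "E a0 a2" "E a0 a3" "E a0 a4" "E a1 a2" "E a2 a3" "E a3 a4"
  shows "\<not> V5_free V E"
proof -
  define f where "f i = [a0, a1, a2, a3, a4] ! i" for i
  have V5: "V5_vertices = {0, 1, 2, 3, 4}" unfolding V5_vertices_def by auto
  have "inj_on f V5_vertices"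
    unfolding f_def V5_vertices_def by (rule inj_on_nth[OF assms(2)]) auto
  moreover have "f ` V5_vertices \<subseteq> V"
    using assms(3-) simple_graph_edge_in[OF sg] unfolding V5 f_def by simp
  moreover have "E (f a) (f b)" if "a \<in> V5_vertices" "b \<in> V5_vertices" "V5_adj a b" for a b
  proof -
    have "a = 0 \<or> a = 1 \<or> a = 2 \<or> a = 3 \<or> a = 4" "b = 0 \<or> b = 1 \<or> b = 2 \<or> b = 3 \<or> b = 4"
      "a \<noteq> b" "a = 0 \<or> b = 0 \<or> a = b + 1 \<or> b = a + 1"
      using that unfolding V5_vertices_def V5_adj_def by auto
    then show ?thesis using assms(3-) simple_graph_sym[OF sg] unfolding f_def by auto
  qed
  ultimately show ?thesis unfolding V5_free_def contains_subgraph_def by blast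
qed

section \<open>Extremal candidates: books\<close>

lemma sq_minus_self_mono:
  fixes a b :: real
  assumes "1/2 \<le> a" and "a \<le> b"
  shows "a * a - a \<le> b * b - b"
proof -
  have "0 \<le> (b - a) * (b + a - 1)" using assms by (intro mult_nonneg_nonneg) auto
  then show ?thesis by (simp add: algebra_simps)
qed

text \<open>The book \<open>B\<^sub>k\<close>: \<open>k\<close> triangles on the common spine \<open>01\<close>, with pages \<open>2, \<dots>, k+1\<close>.\<close>

definition book_adj :: "nat \<Rightarrow> nat \<Rightarrow> nat \<Rightarrow> bool" where
  "book_adj k a b \<longleftrightarrow> a \<le> k + 1 \<and> b \<le> k + 1 \<and> a \<noteq> b \<and> (a \<le> 1 \<or> b \<le> 1)"

definition pendant_book_adj :: "nat \<Rightarrow> nat \<Rightarrow> nat \<Rightarrow> bool" where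
  "pendant_book_adj k a b \<longleftrightarrow> book_adj k a b \<or> (a = 0 \<and> b = k + 2) \<or> (a = k + 2 \<and> b = 0)"

lemma sum_atLeast1_atMost_split: "sum f {1..k + 1} = f 1 + sum f {2..k + 1::nat}"
  by (subst sum.atLeast_Suc_atMost) (auto simp: numeral_2_eq_2)

lemma sum_atLeast0_atMost_split: "sum f {0..k + 1} = f 0 + f 1 + sum f {2..k + 1::nat}"
proof -
  have "sum f {0..k + 1} = f 0 + sum f {Suc 0..k + 1}" by (rule sum.atLeast_Suc_atMost) simp
  then show ?thesis using sum_atLeast1_atMost_split[of f k] by (simp add: add.assoc)
qed

lemma book_simple_graph: "simple_graph {0..k + 1} (book_adj k)"
  unfolding simple_graph_def book_adj_def by auto

lemma book_V5_free: "V5_free {0..k + 1} (book_adj k)"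
  by (rule V5_free_if_neighbourhood_edges_share_vertex,
      rule_tac x = "if a = 0 then 1 else 0" in exI) (auto simp: book_adj_def)

lemma book_no_isolated: "no_isolated {0..k + 1} (book_adj k)"
  unfolding no_isolated_def
proof
  fix v assume "v \<in> {0..k + 1}"
  then show "\<exists>u\<in>{0..k + 1}. book_adj k v u"
    by (intro bexI[of _ "if v = 0 then 1 else 0"]) (auto simp: book_adj_def)
qed

lemma book_nbhd_spine0: "nbhd {0..k + 1} (book_adj k) 0 = {1..k + 1}"
  unfolding nbhd_def book_adj_def by auto

lemma book_nbhd_spine1: "nbhd {0..k + 1} (book_adj k) 1 = insert 0 {2..k + 1}"
  unfolding nbhd_def book_adj_def by auto

lemma book_nbhd_page: "v \<in> {2..k + 1} \<Longrightarrow> nbhd {0..k + 1} (book_adj k) v = {0, 1}"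
  unfolding nbhd_def book_adj_def by auto

lemma book_num_edges: "num_edges {0..k + 1} (book_adj k) = 2 * k + 1"
proof -
  have "2 * num_edges {0..k + 1} (book_adj k) = (\<Sum>v\<in>{0..k + 1}. card (nbhd {0..k + 1} (book_adj k) v))"
    using two_num_edges_eq_sum_degrees[OF book_simple_graph, of "{0..k + 1}"]
    unfolding nbhd_def by simp
  also have "\<dots> = (k + 1) + (k + 1) + (\<Sum>v\<in>{2..k + 1}. 2)"
    unfolding sum_atLeast0_atMost_split book_nbhd_spine0 book_nbhd_spine1
    using book_nbhd_page[of _ k] by simp
  finally show ?thesis by simp
qed

lemma book_eigenvalue:
  fixes r :: real
  assumes "r > 0" and "r * r - r = 2 * real k"
  shows "adj_eigenvalue {0..k + 1} (book_adj k) r"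
proof -
  define x :: "nat \<Rightarrow> real" where "x v = (if v \<le> 1 then 1 else 2 / r)" for v
  have pages: "(\<Sum>v\<in>{2..k + 1}. x v) = k * (2 / r)" unfolding x_def by simp
  have spine: "1 + k * (2 / r) = r" using assms by (simp add: field_simps)
  have "(\<Sum>v \<in> nbhd {0..k + 1} (book_adj k) u. x v) = r * x u" if u: "u \<in> {0..k + 1}" for u
  proof -
    consider "u = 0" | "u = 1" | "u \<in> {2..k + 1}" using u by fastforce
    then show ?thesis
    proof cases
      case 1
      have "(\<Sum>v \<in> nbhd {0..k + 1} (book_adj k) 0. x v) = x 1 + (\<Sum>v\<in>{2..k + 1}. x v)"
        unfolding book_nbhd_spine0 by (rule sum_atLeast1_atMost_split)
      then show ?thesis using 1 pages spine by (simp add: x_def)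
    next
      case 2
      have "(\<Sum>v \<in> nbhd {0..k + 1} (book_adj k) 1. x v) = x 0 + (\<Sum>v\<in>{2..k + 1}. x v)"
        unfolding book_nbhd_spine1 by simp
      then show ?thesis using 2 pages spine by (simp add: x_def)
    next
      case 3
      then have "nbhd {0..k + 1} (book_adj k) u = {0, 1}" by (rule book_nbhd_page)
      then show ?thesis using 3 assms(1) by (simp add: x_def)
    qed
  qed
  then show ?thesis unfolding adj_eigenvalue_def by (intro exI[of _ x]) (auto simp: x_def)
qed

lemma book_spectral_radius_bound:
  fixes k :: nat
  defines "\<rho> \<equiv> spectral_radius {0..k + 1} (book_adj k)"
  shows "1 \<le> \<rho>" and "2 * real k \<le> \<rho> * \<rho> - \<rho>"
proof -
  define r :: real where "r = (1 + sqrt (1 + 8 * k)) / 2"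
  have "sqrt (1 + 8 * k) ^ 2 = 1 + 8 * k" by simp
  then have r: "r * r - r = 2 * real k"
    unfolding r_def by (simp add: field_simps power2_eq_square)
  have "1 \<le> r" unfolding r_def by simp
  moreover have "r \<le> \<rho>"
    unfolding \<rho>_def using book_eigenvalue[OF _ r] \<open>1 \<le> r\<close>
    by (intro adj_eigenvalue_le_spectral_radius) auto
  ultimately show "1 \<le> \<rho>" and "2 * real k \<le> \<rho> * \<rho> - \<rho>"
    using sq_minus_self_mono[of r \<rho>] r by auto
qed

lemma pendant_book_simple_graph: "simple_graph {0..k + 2} (pendant_book_adj k)"
  unfolding simple_graph_def pendant_book_adj_def book_adj_def by auto

lemma pendant_book_V5_free: "V5_free {0..k + 2} (pendant_book_adj k)"
  by (rule V5_free_if_neighbourhood_edges_share_vertex,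
      rule_tac x = "if a = 0 then 1 else 0" in exI) (auto simp: pendant_book_adj_def book_adj_def)

lemma pendant_book_no_isolated: "no_isolated {0..k + 2} (pendant_book_adj k)"
  unfolding no_isolated_def
proof
  fix v assume "v \<in> {0..k + 2}"
  then show "\<exists>u\<in>{0..k + 2}. pendant_book_adj k v u"
    by (intro bexI[of _ "if v = 0 then 1 else 0"]) (auto simp: pendant_book_adj_def book_adj_def)
qed

lemma pendant_book_nbhd_spine0: "nbhd {0..k + 2} (pendant_book_adj k) 0 = {1..k + 2}"
  unfolding nbhd_def pendant_book_adj_def book_adj_def by auto

lemma pendant_book_nbhd_spine1: "nbhd {0..k + 2} (pendant_book_adj k) 1 = insert 0 {2..k + 1}"
  unfolding nbhd_def pendant_book_adj_def book_adj_def by auto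

lemma pendant_book_nbhd_page:
  "v \<in> {2..k + 1} \<Longrightarrow> nbhd {0..k + 2} (pendant_book_adj k) v = {0, 1}"
  unfolding nbhd_def pendant_book_adj_def book_adj_def by auto

lemma pendant_book_nbhd_pendant: "nbhd {0..k + 2} (pendant_book_adj k) (k + 2) = {0}"
  unfolding nbhd_def pendant_book_adj_def book_adj_def by auto

lemma sum_atLeast0_atMost_Suc_split:
  "sum f {0..k + 2} = f 0 + f 1 + sum f {2..k + 1::nat} + f (k + 2)"
  using sum.atLeast0_atMost_Suc[of f "k + 1"] sum_atLeast0_atMost_split[of f k] by simp

lemma pendant_book_num_edges: "num_edges {0..k + 2} (pendant_book_adj k) = 2 * k + 2"
proof -
  let ?d = "\<lambda>v. card (nbhd {0..k + 2} (pendant_book_adj k) v)"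
  have "2 * num_edges {0..k + 2} (pendant_book_adj k) = (\<Sum>v\<in>{0..k + 2}. ?d v)"
    using two_num_edges_eq_sum_degrees[OF pendant_book_simple_graph, of "{0..k + 2}"]
    unfolding nbhd_def by simp
  also have "\<dots> = (k + 2) + (k + 1) + (\<Sum>v\<in>{2..k + 1}. 2) + 1"
    unfolding sum_atLeast0_atMost_Suc_split pendant_book_nbhd_spine0 pendant_book_nbhd_spine1
      pendant_book_nbhd_pendant
    using pendant_book_nbhd_page[of _ k] by simp
  finally show ?thesis by simp
qed

text \<open>The Perron vector of the pendant book is \<open>1\<close> at \<open>0\<close>, \<open>c\<close> at \<open>1\<close>, \<open>(1 + c)/r\<close> on the pages
  and \<open>1/r\<close> at \<open>k + 2\<close>; the eigen-equations at \<open>0\<close> and \<open>1\<close> read \<open>c (r + k) = r\<^sup>2 - k - 1\<close> and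
  \<open>c (r\<^sup>2 - k) = r + k\<close>, and eliminating \<open>c\<close> gives the quartic below.\<close>

lemma pendant_book_eigenvalue:
  fixes r :: real
  assumes r: "r > 0" "r * r > real k" and quartic: "(r * r - k - 1) * (r * r - k) = (r + k)^2"
  shows "adj_eigenvalue {0..k + 2} (pendant_book_adj k) r"
proof -
  define c where "c = (r + k) / (r * r - k)"
  have c1: "c * (r * r - k) = r + k" unfolding c_def using r by simp
  have "c * (r + k) * (r * r - k) = (r + k) * (c * (r * r - k))" by (simp add: algebra_simps)
  also have "\<dots> = (r * r - k - 1) * (r * r - k)" using c1 quartic by (simp add: power2_eq_square)
  finally have "c * (r + k) * (r * r - k) = (r * r - k - 1) * (r * r - k)" .
  then have c0: "c * (r + k) = r * r - k - 1" using r by simp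
  define x :: "nat \<Rightarrow> real" where
    "x v = (if v = 0 then 1 else if v = 1 then c else if v = k + 2 then 1 / r else (1 + c) / r)" for v
  have pages: "(\<Sum>v\<in>{2..k + 1}. x v) = k * ((1 + c) / r)" unfolding x_def by simp
  have "(\<Sum>v \<in> nbhd {0..k + 2} (pendant_book_adj k) u. x v) = r * x u" if u: "u \<in> {0..k + 2}" for u
  proof -
    consider "u = 0" | "u = 1" | "u \<in> {2..k + 1}" | "u = k + 2" using u by fastforce
    then show ?thesis
    proof cases
      case 1
      have "(\<Sum>v \<in> nbhd {0..k + 2} (pendant_book_adj k) 0. x v)
          = x 1 + (\<Sum>v\<in>{2..k + 1}. x v) + x (k + 2)"
        unfolding pendant_book_nbhd_spine0
        using sum.atLeast_Suc_atMost[of 1 "k + 2" x] sum_atLeast1_atMost_split[of x k]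
          sum.cl_ivl_Suc[of x 1 "k + 1"] by simp
      also have "\<dots> * r = r * r" using r c0 by (simp add: pages x_def field_simps)
      finally show ?thesis using 1 r(1) by (simp add: x_def)
    next
      case 2
      have "(\<Sum>v \<in> nbhd {0..k + 2} (pendant_book_adj k) 1. x v) * r = (r * c) * r"
        unfolding pendant_book_nbhd_spine1 using r c1 by (simp add: pages x_def field_simps)
      then show ?thesis using 2 r(1) by (simp add: x_def)
    next
      case 3
      then have "nbhd {0..k + 2} (pendant_book_adj k) u = {0, 1}" by (rule pendant_book_nbhd_page)
      then show ?thesis using 3 r(1) by (simp add: x_def)
    next
      case 4
      show ?thesis unfolding 4 pendant_book_nbhd_pendant using r(1) by (simp add: x_def)
    qed
  qed
  then show ?thesis unfolding adj_eigenvalue_def by (intro exI[of _ x]) (auto simp: x_def)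
qed

text \<open>At \<open>r\<^sub>0\<close> with \<open>r\<^sub>0\<^sup>2 - r\<^sub>0 = 2k + 1/2\<close> the quartic has value \<open>-1/4\<close>, at \<open>k + 2\<close> it is
  nonnegative.\<close>

lemma pendant_book_quartic_root:
  obtains r :: real where "1 < r" "2 * real k + 1/2 < r * r - r" "real k < r * r"
    "(r * r - k - 1) * (r * r - k) = (r + k)^2"
proof -
  define g :: "real \<Rightarrow> real" where "g t = (t * t - k - 1) * (t * t - k) - (t + k)^2" for t
  define r0 where "r0 = (1 + sqrt (8 * k + 3)) / 2"
  have "sqrt (8 * k + 3) ^ 2 = 8 * k + 3" by simp
  then have r0_sq: "r0 * r0 - r0 = 2 * k + 1/2" unfolding r0_def by (simp add: field_simps power2_eq_square)
  have "sqrt 1 < sqrt (8 * k + 3)" by (intro real_sqrt_less_mono) simp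
  then have r0_gt: "1 < r0" unfolding r0_def by simp
  have "sqrt (8 * k + 3) \<le> sqrt ((2 * k + 3)^2)"
    by (intro real_sqrt_le_mono) (simp add: power2_eq_square algebra_simps)
  then have r0_le: "r0 \<le> k + 2" unfolding r0_def by simp
  have g_r0: "g r0 = -1/4"
  proof -
    have "g r0 = (r0 + k - 1/2) * (r0 + k + 1/2) - (r0 + k)^2"
      unfolding g_def using r0_sq by (simp add: algebra_simps)
    then show ?thesis by (simp add: algebra_simps power2_eq_square)
  qed
  have "(2 * real k + 2) * (2 * real k + 2)
      \<le> ((real k + 2) * (real k + 2) - k - 1) * ((real k + 2) * (real k + 2) - k)"
    by (rule mult_mono) (simp_all add: algebra_simps)
  then have g_top: "0 \<le> g (k + 2)" unfolding g_def by (simp add: power2_eq_square algebra_simps)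
  have "continuous_on {r0..k + 2} g" unfolding g_def by (intro continuous_intros)
  then obtain r where r: "r0 \<le> r" "r \<le> k + 2" "g r = 0"
    using IVT'[of g r0 0 "k + 2"] g_r0 g_top r0_le by auto
  with g_r0 have "r0 < r" by (cases "r = r0") auto
  then have "0 < (r - r0) * (r + r0 - 1)" using r0_gt by simp
  then have rr: "2 * real k + 1/2 < r * r - r" using r0_sq by (simp add: algebra_simps)
  moreover have "1 < r" using \<open>r0 < r\<close> r0_gt by simp
  ultimately show ?thesis using that r(3) unfolding g_def by simp
qed

lemma pendant_book_spectral_radius_bound:
  fixes k :: nat
  defines "\<rho> \<equiv> spectral_radius {0..k + 2} (pendant_book_adj k)"
  shows "1 < \<rho>" and "2 * real k + 1/2 < \<rho> * \<rho> - \<rho>"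
proof -
  obtain r where r: "1 < r" "2 * real k + 1/2 < r * r - r" "real k < r * r"
    "(r * r - k - 1) * (r * r - k) = (r + k)^2"
    by (rule pendant_book_quartic_root)
  have "r \<le> \<rho>"
    unfolding \<rho>_def using pendant_book_eigenvalue[OF _ r(3,4)] r(1)
    by (intro adj_eigenvalue_le_spectral_radius) auto
  then show "1 < \<rho>" and "2 * real k + 1/2 < \<rho> * \<rho> - \<rho>"
    using sq_minus_self_mono[of r \<rho>] r by auto
qed

lemma V5_free_graph_with_large_spectral_radius:
  fixes m :: nat
  assumes "1 \<le> m"
  obtains V' :: "nat set" and E' where "simple_graph V' E'" "V5_free V' E'" "no_isolated V' E'"
    "num_edges V' E' = m" "1 \<le> spectral_radius V' E'"
    "real m - 3/2 < spectral_radius V' E' * spectral_radius V' E' - spectral_radius V' E'"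
proof (cases "even m")
  case True
  define k where "k = m div 2 - 1"
  with True assms have "m = 2 * k + 2" by auto
  then show ?thesis
    using pendant_book_num_edges[of k] pendant_book_spectral_radius_bound[of k]
    by (intro that[OF pendant_book_simple_graph pendant_book_V5_free pendant_book_no_isolated]) auto
next
  case False
  define k where "k = m div 2"
  with False have "m = 2 * k + 1" by presburger
  then show ?thesis
    using book_num_edges[of k] book_spectral_radius_bound[of k]
    by (intro that[OF book_simple_graph book_V5_free book_no_isolated]) auto
qed

context
  fixes V :: "nat set" and E :: "nat \<Rightarrow> nat \<Rightarrow> bool" and m :: nat
  assumes extremal: "\<forall>V' (E' :: nat \<Rightarrow> nat \<Rightarrow> bool). simple_graph V' E' \<and> V5_free V' E' \<and>
           no_isolated V' E' \<and> num_edges V' E' = m \<longrightarrow>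
           spectral_radius V' E' \<le> spectral_radius V E"
begin

lemma extremal_spectral_radius_lower_bound:
  assumes "1 \<le> m"
  shows "1 \<le> spectral_radius V E"
    and "real m - 3/2 < spectral_radius V E * spectral_radius V E - spectral_radius V E"
proof -
  obtain V' :: "nat set" and E' where "simple_graph V' E'" "V5_free V' E'" "no_isolated V' E'"
    "num_edges V' E' = m" and \<rho>': "1 \<le> spectral_radius V' E'"
    "real m - 3/2 < spectral_radius V' E' * spectral_radius V' E' - spectral_radius V' E'"
    using V5_free_graph_with_large_spectral_radius[OF assms] by blast
  then have le: "spectral_radius V' E' \<le> spectral_radius V E" using extremal by blast
  then show "1 \<le> spectral_radius V E" using \<rho>' by simp
  show "real m - 3/2 < spectral_radius V E * spectral_radius V E - spectral_radius V E"
    using sq_minus_self_mono[OF _ le] \<rho>' by linarith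
qed

lemma extremal_spectral_radius_gt_3:
  assumes "8 \<le> m"
  shows "3 < spectral_radius V E"
proof (rule ccontr)
  assume "\<not> 3 < spectral_radius V E"
  then have "spectral_radius V E * spectral_radius V E - spectral_radius V E \<le> 3 * 3 - 3"
    using sq_minus_self_mono[of "spectral_radius V E" 3] extremal_spectral_radius_lower_bound(1)
      assms by simp
  then show False using extremal_spectral_radius_lower_bound(2) assms by simp
qed

end

section \<open>The neighbourhood of a vertex in a \<open>V\<^sub>5\<close>-free graph\<close>

lemma ex_other_elem_if_card_ge_2:
  assumes "finite S" and "2 \<le> card S"
  obtains b where "b \<in> S" "b \<noteq> a"
proof -
  have "\<not> S \<subseteq> {a}" using card_mono[of "{a}" S] assms by auto
  then show ?thesis using that by blast
qed

lemma ex_other_elem_if_card_ge_3: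
  assumes "finite S" and "3 \<le> card S"
  obtains e where "e \<in> S" "e \<noteq> a" "e \<noteq> b"
proof -
  have "card {a, b} \<le> 2" by (cases "a = b") auto
  then have "\<not> S \<subseteq> {a, b}" using card_mono[of "{a, b}" S] assms by auto
  then show ?thesis using that by blast
qed

lemma card_2_eq_doubleton:
  assumes "finite S" "card S = 2" "a \<in> S" "b \<in> S" "a \<noteq> b"
  shows "S = {a, b}"
  using card_subset_eq[OF assms(1), of "{a, b}"] assms by simp

text \<open>A copy of \<open>V\<^sub>5\<close> with apex \<open>u\<close> is a path on four vertices inside \<open>U = N(u)\<close>, so the graph
  induced on \<open>U\<close> is \<open>P\<^sub>4\<close>-free. Its vertices are therefore isolated, vertices of triangle
  components, leaves, or centres of stars whose other vertices are all leaves.\<close>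

locale V5_free_hub =
  fixes V :: "'a set" and E :: "'a \<Rightarrow> 'a \<Rightarrow> bool" and u :: 'a
  assumes simple: "simple_graph V E" and V5_free: "V5_free V E" and hub_in: "u \<in> V"
begin

definition "U = nbhd V E u"
definition "nbU v = {z\<in>U. E v z}"
definition "degU v = card (nbU v)"
definition "isolU = {v\<in>U. degU v = 0}"
definition "leafU = {v\<in>U. degU v = 1}"
definition "triU = {v\<in>U. degU v = 2 \<and> (\<forall>a b. a \<in> nbU v \<and> b \<in> nbU v \<and> a \<noteq> b \<longrightarrow> E a b)}"
definition "centreU = {v\<in>U. 2 \<le> degU v \<and> v \<notin> triU}"

lemma finite_V: "finite V" using simple_graph_finite[OF simple] .
lemma sym: "E a b \<Longrightarrow> E b a" using simple_graph_sym[OF simple] .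
lemma irrefl: "E a b \<Longrightarrow> a \<noteq> b" using simple_graph_irrefl[OF simple] .
lemma U_subset: "U \<subseteq> V" unfolding U_def nbhd_def by auto
lemma finite_U: "finite U" using finite_V U_subset finite_subset by blast
lemma finite_nbU: "finite (nbU v)" unfolding nbU_def using finite_U by simp
lemma nbU_subset: "nbU v \<subseteq> U" unfolding nbU_def by auto
lemma nbU_iff: "z \<in> nbU v \<longleftrightarrow> z \<in> U \<and> E v z" unfolding nbU_def by auto
lemma hub_adj: "v \<in> U \<Longrightarrow> E u v" unfolding U_def nbhd_def by auto
lemma hub_notin_U: "u \<notin> U" using hub_adj irrefl by blast

lemma U_partition: "U = isolU \<union> leafU \<union> triU \<union> centreU"
  unfolding isolU_def leafU_def triU_def centreU_def by auto

lemma no_path4_in_U: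
  assumes "a \<in> U" "b \<in> U" "c \<in> U" "d \<in> U" "distinct [a, b, c, d]" "E a b" "E b c" "E c d"
  shows False
proof -
  have "distinct [u, a, b, c, d]" using assms(1-5) hub_notin_U by auto
  then show False using fan_imp_not_V5_free[OF simple] V5_free assms hub_adj by blast
qed

lemma centre_nbr_is_leaf:
  assumes c: "c \<in> centreU" and a: "a \<in> nbU c"
  shows "degU a = 1"
proof (rule ccontr)
  assume "degU a \<noteq> 1"
  have cU: "c \<in> U" and dc: "2 \<le> degU c" and "c \<notin> triU" using c unfolding centreU_def by auto
  have aU: "a \<in> U" and Eca: "E c a" using a unfolding nbU_def by auto
  then have "c \<in> nbU a" using cU sym unfolding nbU_def by auto
  then have "degU a \<noteq> 0" unfolding degU_def using finite_nbU[of a] by auto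
  with \<open>degU a \<noteq> 1\<close> have "2 \<le> degU a" by simp
  then obtain y where y: "y \<in> U" "E a y" "y \<noteq> c"
    using ex_other_elem_if_card_ge_2[OF finite_nbU] unfolding degU_def nbU_iff by metis
  obtain b where b: "b \<in> U" "E c b" "b \<noteq> a"
    using ex_other_elem_if_card_ge_2[OF finite_nbU] dc unfolding degU_def nbU_iff by metis
  show False
  proof (cases "y = b")
    case False
    then have "distinct [y, a, c, b]" using y b irrefl[OF y(2)] irrefl[OF Eca] irrefl[OF b(2)] by auto
    then show False using no_path4_in_U[OF y(1) aU cU b(1)] y(2) sym Eca b(2) by blast
  next
    case True
    with y have Eab: "E a b" by simp
    show False
    proof (cases "degU c = 2")
      case True
      then have "nbU c = {a, b}"
        using card_2_eq_doubleton[OF finite_nbU] a b unfolding degU_def nbU_iff by metis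
      then have "c \<in> triU" unfolding triU_def using cU True Eab sym by auto
      with \<open>c \<notin> triU\<close> show False by blast
    next
      case False
      with dc have "3 \<le> degU c" by simp
      then obtain e where e: "e \<in> U" "E c e" "e \<noteq> a" "e \<noteq> b"
        using ex_other_elem_if_card_ge_3[OF finite_nbU] unfolding degU_def nbU_iff by metis
      then have "distinct [e, c, a, b]"
        using irrefl[OF e(2)] irrefl[OF Eca] irrefl[OF Eab] irrefl[OF b(2)] by auto
      then show False using no_path4_in_U[OF e(1) cU aU b(1)] e(2) sym Eca Eab by blast
    qed
  qed
qed

lemma centre_nbrs_disjoint:
  assumes "c \<in> centreU" "c' \<in> centreU" "c \<noteq> c'"
  shows "nbU c \<inter> nbU c' = {}"
proof (rule ccontr)
  assume "nbU c \<inter> nbU c' \<noteq> {}"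
  then obtain l where l: "l \<in> nbU c" "l \<in> nbU c'" by blast
  have "{c, c'} \<subseteq> nbU l" using l assms(1,2) sym unfolding nbU_def centreU_def by auto
  then have "card {c, c'} \<le> degU l" unfolding degU_def using finite_nbU card_mono by metis
  then show False using centre_nbr_is_leaf[OF assms(1) l(1)] assms(3) by simp
qed

lemma sum_degU_centres_le: "(\<Sum>c\<in>centreU. degU c) \<le> card leafU"
proof -
  have "(\<Sum>c\<in>centreU. degU c) = card (\<Union>c\<in>centreU. nbU c)"
    unfolding degU_def using finite_U finite_nbU centre_nbrs_disjoint
    by (subst card_UN_disjoint) (auto simp: centreU_def)
  also have "\<dots> \<le> card leafU"
    using centre_nbr_is_leaf nbU_subset finite_U by (intro card_mono) (auto simp: leafU_def)
  finally show ?thesis .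
qed

definition deficit :: "('a \<Rightarrow> real) \<Rightarrow> 'a \<Rightarrow> real" where
  "deficit y v = real (degU v) / 2 - (real (degU v) - 1) * y v"

lemma isolU_triU_disjoint: "isolU \<inter> triU = {}"
  unfolding isolU_def triU_def by auto

lemma sum_deficit_split:
  "(\<Sum>v\<in>U. deficit y v) = (\<Sum>v\<in>isolU. y v) + real (card leafU) / 2
     + (\<Sum>v\<in>triU. 1 - y v) + (\<Sum>v\<in>centreU. deficit y v)"
proof -
  have fin: "finite isolU" "finite leafU" "finite triU" "finite centreU"
    unfolding isolU_def leafU_def triU_def centreU_def using finite_U by auto
  have "(\<Sum>v\<in>U. deficit y v) = (\<Sum>v\<in>isolU. deficit y v) + (\<Sum>v\<in>leafU. deficit y v)
      + (\<Sum>v\<in>triU. deficit y v) + (\<Sum>v\<in>centreU. deficit y v)"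
  proof -
    have "isolU \<inter> leafU = {}" "(isolU \<union> leafU) \<inter> triU = {}"
      "(isolU \<union> leafU \<union> triU) \<inter> centreU = {}"
      unfolding isolU_def leafU_def triU_def centreU_def by auto
    then show ?thesis unfolding U_partition using fin by (simp add: sum.union_disjoint)
  qed
  moreover have "(\<Sum>v\<in>isolU. deficit y v) = (\<Sum>v\<in>isolU. y v)"
    by (rule sum.cong) (auto simp: isolU_def deficit_def)
  moreover have "(\<Sum>v\<in>leafU. deficit y v) = (\<Sum>v\<in>leafU. 1/2)"
    by (rule sum.cong) (auto simp: leafU_def deficit_def)
  moreover have "(\<Sum>v\<in>triU. deficit y v) = (\<Sum>v\<in>triU. 1 - y v)"
    by (rule sum.cong) (auto simp: triU_def deficit_def)
  ultimately show ?thesis by simp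
qed

text \<open>Each centre costs at least \<open>1 - deg\<^sub>U/2\<close>, and the leaves it owns pay \<open>1/2\<close> each.\<close>

lemma sum_deficit_centres_ge:
  assumes "\<And>v. v \<in> U \<Longrightarrow> y v \<le> 1"
  shows "real (card centreU) - real (card leafU) / 2 \<le> (\<Sum>v\<in>centreU. deficit y v)"
proof -
  have "(\<Sum>v\<in>centreU. 1 - real (degU v) / 2) \<le> (\<Sum>v\<in>centreU. deficit y v)"
  proof (rule sum_mono)
    fix v assume "v \<in> centreU"
    then have "2 \<le> degU v" "v \<in> U" unfolding centreU_def by auto
    then have "(real (degU v) - 1) * y v \<le> real (degU v) - 1"
      using assms mult_left_le by fastforce
    then show "1 - real (degU v) / 2 \<le> deficit y v" unfolding deficit_def by simp
  qed
  moreover have "(\<Sum>v\<in>centreU. 1 - real (degU v) / 2)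
      = card centreU - real (\<Sum>c\<in>centreU. degU c) / 2"
    by (simp add: sum_subtractf sum_divide_distrib)
  moreover have "real (\<Sum>c\<in>centreU. degU c) \<le> card leafU"
    using sum_degU_centres_le by linarith
  ultimately show ?thesis by linarith
qed

lemma sum_deficit_ge:
  assumes "\<And>v. v \<in> U \<Longrightarrow> y v \<le> 1"
  shows "(\<Sum>v\<in>isolU. y v) + (\<Sum>v\<in>triU. 1 - y v) + real (card centreU)
           + (if centreU = {} then real (card leafU) / 2 else 0) \<le> (\<Sum>v\<in>U. deficit y v)"
proof (cases "centreU = {}")
  case True
  then show ?thesis using sum_deficit_split[of y] by simp
next
  case False
  then show ?thesis using sum_deficit_split[of y] sum_deficit_centres_ge[of y, OF assms] by simp
qed

lemma sum_deficit_parts_nonneg: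
  fixes y :: "'a \<Rightarrow> real"
  assumes "\<And>v. v \<in> U \<Longrightarrow> 0 \<le> y v \<and> y v \<le> 1"
  shows "0 \<le> (\<Sum>v\<in>isolU. y v)" and "0 \<le> (\<Sum>v\<in>triU. 1 - y v)"
proof -
  show "0 \<le> (\<Sum>v\<in>isolU. y v)" using assms by (intro sum_nonneg) (simp add: isolU_def)
  show "0 \<le> (\<Sum>v\<in>triU. 1 - y v)" using assms by (intro sum_nonneg) (simp add: triU_def)
qed

lemma sum_deficit_nonneg:
  assumes "\<And>v. v \<in> U \<Longrightarrow> 0 \<le> y v \<and> y v \<le> 1"
  shows "0 \<le> (\<Sum>v\<in>U. deficit y v)"
proof -
  have "0 \<le> (if centreU = {} then real (card leafU) / 2 else 0)" by simp
  then show ?thesis using sum_deficit_ge[of y] sum_deficit_parts_nonneg[OF assms] assms by force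
qed

lemma sum_deficit_lt_half:
  assumes "\<And>v. v \<in> U \<Longrightarrow> 0 \<le> y v \<and> y v \<le> 1" and "(\<Sum>v\<in>U. deficit y v) < 1/2"
  shows "U = isolU \<union> triU" and "(\<Sum>v\<in>U. deficit y v) = (\<Sum>v\<in>isolU. y v) + (\<Sum>v\<in>triU. 1 - y v)"
proof -
  have fin: "finite leafU" "finite centreU"
    unfolding leafU_def centreU_def using finite_U by auto
  note ge = sum_deficit_ge[of y] sum_deficit_parts_nonneg[OF assms(1)]
  have "centreU = {}"
  proof (rule ccontr)
    assume "centreU \<noteq> {}"
    then have "1 \<le> card centreU" using fin(2) by (simp add: Suc_le_eq card_gt_0_iff)
    then show False using ge \<open>centreU \<noteq> {}\<close> assms by force
  qed
  moreover have "leafU = {}"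
  proof (rule ccontr)
    assume "leafU \<noteq> {}"
    then have "1 \<le> card leafU" using fin(1) by (simp add: Suc_le_eq card_gt_0_iff)
    then show False using ge \<open>centreU = {}\<close> assms by force
  qed
  ultimately show "U = isolU \<union> triU"
    and "(\<Sum>v\<in>U. deficit y v) = (\<Sum>v\<in>isolU. y v) + (\<Sum>v\<in>triU. 1 - y v)"
    using U_partition sum_deficit_split[of y] by auto
qed

lemma triangle_mate:
  assumes v: "v \<in> triU" and a: "a \<in> nbU v"
  obtains b where "nbU v = {a, b}" "a \<noteq> b" "E a b" "nbU a = {v, b}" "a \<in> triU"
proof -
  have vU: "v \<in> U" and deg: "degU v = 2"
    and tri: "\<And>a b. a \<in> nbU v \<Longrightarrow> b \<in> nbU v \<Longrightarrow> a \<noteq> b \<Longrightarrow> E a b"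
    using v unfolding triU_def by auto
  have "2 \<le> card (nbU v)" using deg unfolding degU_def by simp
  then obtain b where b: "b \<in> nbU v" "b \<noteq> a" by (rule ex_other_elem_if_card_ge_2[OF finite_nbU])
  have nbv: "nbU v = {a, b}"
    using card_2_eq_doubleton[OF finite_nbU, of v a b] deg a b unfolding degU_def by simp
  have Eab: "E a b" using tri a b by auto
  have aU: "a \<in> U" "E v a" and bU: "b \<in> U" "E v b" using a b unfolding nbU_def by auto
  have nba: "nbU a = {v, b}"
  proof
    show "{v, b} \<subseteq> nbU a" using vU bU aU Eab sym unfolding nbU_def by auto
    show "nbU a \<subseteq> {v, b}"
    proof
      fix z assume "z \<in> nbU a"
      then have zU: "z \<in> U" "E a z" unfolding nbU_def by auto
      show "z \<in> {v, b}"
      proof (rule ccontr)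
        assume "z \<notin> {v, b}"
        then have "distinct [z, a, v, b]"
          using irrefl[OF zU(2)] irrefl[OF aU(2)] irrefl[OF bU(2)] b(2) by auto
        then show False using no_path4_in_U[OF zU(1) aU(1) vU bU(1)] zU(2) aU(2) bU(2) sym by blast
      qed
    qed
  qed
  have "degU a = 2" unfolding degU_def nba using irrefl[OF bU(2)] by simp
  moreover have "\<forall>c d. c \<in> nbU a \<and> d \<in> nbU a \<and> c \<noteq> d \<longrightarrow> E c d"
    unfolding nba using bU(2) sym by auto
  ultimately have "a \<in> triU" unfolding triU_def using aU(1) by blast
  with nbv b(2) Eab nba show ?thesis by (intro that) auto
qed

lemma triangle_nbr_in_triU:
  assumes "v \<in> triU" "a \<in> nbU v"
  shows "a \<in> triU"
  by (rule triangle_mate[OF assms]) simp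

lemma outside_vertex_misses_triangle_mates:
  assumes w: "w \<in> V" "w \<notin> U" "w \<noteq> u" and v: "v \<in> triU" "E w v" and a: "a \<in> nbU v"
  shows "\<not> E w a"
proof
  assume Ewa: "E w a"
  obtain b where b: "nbU v = {a, b}" "a \<noteq> b" by (rule triangle_mate[OF v(1) a]) simp
  have vU: "v \<in> U" using v unfolding triU_def by simp
  have "b \<in> nbU v" using b(1) by simp
  then have aU: "a \<in> U" "E v a" and bU: "b \<in> U" "E v b" using a unfolding nbU_iff by auto
  \<comment> \<open>\<open>v\<close> is the apex of a fan over the path \<open>w a u b\<close>\<close>
  have "distinct [v, w, a, u, b]" using w vU aU bU hub_notin_U b(2) irrefl[OF aU(2)] irrefl[OF bU(2)] by auto
  moreover have "E v w" "E v u" "E a u" "E u b"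
    using sym[OF v(2)] sym[OF hub_adj[OF vU]] sym[OF hub_adj[OF aU(1)]] hub_adj[OF bU(1)] .
  ultimately show False
    using fan_imp_not_V5_free[OF simple, of v w a u b] V5_free aU(2) bU(2) Ewa by blast
qed

text \<open>The triangles met by an outside vertex \<open>w\<close> are met in exactly one vertex each, so \<open>w\<close>
  sees at most a third of the triangle vertices.\<close>

lemma card_triangle_nbrs_of_outside_vertex:
  assumes w: "w \<in> V" "w \<notin> U" "w \<noteq> u"
  shows "3 * card {v\<in>triU. E w v} \<le> card triU"
proof -
  define A where "A = {v\<in>triU. E w v}"
  define B where "B = (\<Union>v\<in>A. nbU v)"
  have fin: "finite triU" unfolding triU_def using finite_U by simp
  have AM: "A \<subseteq> triU" unfolding A_def by auto
  have BM: "B \<subseteq> triU" unfolding B_def A_def using triangle_nbr_in_triU by auto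
  have AB: "A \<inter> B = {}"
    unfolding A_def B_def using outside_vertex_misses_triangle_mates[OF w] by blast
  have disj: "nbU v1 \<inter> nbU v2 = {}" if v: "v1 \<in> A" "v2 \<in> A" "v1 \<noteq> v2" for v1 v2
  proof (rule ccontr)
    assume "nbU v1 \<inter> nbU v2 \<noteq> {}"
    then obtain z where z: "z \<in> nbU v1" "z \<in> nbU v2" by blast
    have v1: "v1 \<in> triU" "E w v1" and v2: "v2 \<in> triU" "E w v2" using v unfolding A_def by auto
    obtain b where b: "nbU v1 = {z, b}" "nbU z = {v1, b}" by (rule triangle_mate[OF v1(1) z(1)]) simp
    have "v2 \<in> U" using v2(1) unfolding triU_def by simp
    then have "v2 \<in> nbU z" using z(2) sym unfolding nbU_iff by blast
    then have "v2 \<in> nbU v1" using b v(3) by auto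
    then show False using outside_vertex_misses_triangle_mates[OF w v1] v2(2) by blast
  qed
  have "card B = (\<Sum>v\<in>A. card (nbU v))"
    unfolding B_def using fin AM finite_subset finite_nbU disj by (subst card_UN_disjoint) auto
  also have "\<dots> = 2 * card A" using AM unfolding triU_def degU_def by (simp add: subset_iff)
  finally have "3 * card A = card (A \<union> B)"
    using card_Un_disjoint[OF finite_subset[OF AM fin] finite_subset[OF BM fin] AB] by simp
  also have "\<dots> \<le> card triU" using AM BM fin by (intro card_mono) auto
  finally show ?thesis unfolding A_def .
qed

end

section \<open>A normalised Perron vector\<close>

locale hub_eigenvector = V5_free_hub +
  fixes y :: "'a \<Rightarrow> real" and r :: real
  assumes pos: "v \<in> V \<Longrightarrow> 0 < y v" and le_one: "v \<in> V \<Longrightarrow> y v \<le> 1" and hub_one: "y u = 1"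
    and eigen: "v \<in> V \<Longrightarrow> (\<Sum>z\<in>nbhd V E v. y z) = r * y v"
begin

definition "W = V - (U \<union> {u})"
definition "nbW v = {z\<in>W. E v z}"
definition "degW v = card (nbW v)"
definition "cost w = real (degU w) * (1 - y w)"

lemma W_subset: "W \<subseteq> V" unfolding W_def by auto
lemma finite_W: "finite W" unfolding W_def using finite_V by simp
lemma finite_nbW: "finite (nbW v)" unfolding nbW_def using finite_W by simp
lemma V_split: "V = insert u (U \<union> W)" unfolding W_def using hub_in U_subset by auto
lemma U_W_disjoint: "U \<inter> W = {}" unfolding W_def by auto
lemma hub_notin_W: "u \<notin> W" unfolding W_def by auto
lemma W_outside: "w \<in> W \<Longrightarrow> w \<in> V \<and> w \<notin> U \<and> w \<noteq> u" unfolding W_def by auto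
lemma W_not_adj_hub: "w \<in> W \<Longrightarrow> \<not> E w u" unfolding W_def U_def nbhd_def using sym by auto

lemma y_bounds: "v \<in> V \<Longrightarrow> 0 \<le> y v \<and> y v \<le> 1"
  using pos le_one by (simp add: less_imp_le)

lemma nbhd_U_vertex: "v \<in> U \<Longrightarrow> nbhd V E v = insert u (nbU v \<union> nbW v)"
  unfolding nbhd_def nbU_def nbW_def using V_split hub_adj sym by auto

lemma nbhd_W_vertex:
  assumes "w \<in> W"
  shows "nbhd V E w = nbU w \<union> nbW w"
proof -
  have "z \<in> U \<union> W" if "z \<in> V" "E w z" for z
    using that V_split W_not_adj_hub[OF assms] by auto
  then show ?thesis unfolding nbhd_def nbU_def nbW_def using V_split by auto
qed

lemma nbU_nbW_disjoint: "nbU v \<inter> nbW v = {}" "u \<notin> nbU v \<union> nbW v"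
  unfolding nbU_def nbW_def using U_W_disjoint hub_notin_U hub_notin_W by auto

lemma sum_V_split: "sum g V = g u + sum g U + sum g W"
proof -
  have "sum g (insert u (U \<union> W)) = g u + (sum g U + sum g W)"
    using finite_U finite_W U_W_disjoint hub_notin_U hub_notin_W by (simp add: sum.union_disjoint)
  then show ?thesis using V_split by (simp add: add.assoc)
qed

lemma eigenvalue_eq_sum_U: "r = (\<Sum>v\<in>U. y v)"
  using eigen[OF hub_in] hub_one unfolding U_def by simp

lemma degree_U_vertex: "v \<in> U \<Longrightarrow> card (nbhd V E v) = 1 + degU v + degW v"
  unfolding nbhd_U_vertex degU_def degW_def using nbU_nbW_disjoint finite_nbU finite_nbW
  by (simp add: card_Un_disjoint)

lemma degree_W_vertex: "w \<in> W \<Longrightarrow> card (nbhd V E w) = degU w + degW w"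
  unfolding nbhd_W_vertex degU_def degW_def using nbU_nbW_disjoint finite_nbU finite_nbW
  by (simp add: card_Un_disjoint)

lemma eigen_U_vertex:
  "v \<in> U \<Longrightarrow> r * y v = 1 + (\<Sum>z\<in>nbU v. y z) + (\<Sum>z\<in>nbW v. y z)"
  using eigen[of v] U_subset nbU_nbW_disjoint finite_nbU finite_nbW hub_one
  by (auto simp: nbhd_U_vertex sum.union_disjoint)

lemma sq_eigenvalue_eq:
  "r * r = real (card U) + (\<Sum>z\<in>U. real (degU z) * y z) + (\<Sum>z\<in>W. real (degU z) * y z)"
proof -
  have sym': "\<And>a b. E a b \<Longrightarrow> E b a" using sym .
  have "r * r = (\<Sum>v\<in>U. r * y v)" using eigenvalue_eq_sum_U by (simp add: sum_distrib_left)
  also have "\<dots> = (\<Sum>v\<in>U. 1 + (\<Sum>z\<in>nbU v. y z) + (\<Sum>z\<in>nbW v. y z))"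
    using eigen_U_vertex by simp
  also have "\<dots> = real (card U) + (\<Sum>v\<in>U. \<Sum>z\<in>nbU v. y z) + (\<Sum>v\<in>U. \<Sum>z\<in>nbW v. y z)"
    by (simp add: sum.distrib)
  also have "(\<Sum>v\<in>U. \<Sum>z\<in>nbU v. y z) = (\<Sum>z\<in>U. real (degU z) * y z)"
    unfolding nbU_def degU_def using sum_nbhd_swap[OF finite_U finite_U sym'] by simp
  also have "(\<Sum>v\<in>U. \<Sum>z\<in>nbW v. y z) = (\<Sum>z\<in>W. real (degU z) * y z)"
    unfolding nbW_def degU_def nbU_def using sum_nbhd_swap[OF finite_U finite_W sym'] by simp
  finally show ?thesis .
qed

lemma two_num_edges_eq:
  "2 * real (num_edges V E) = 2 * real (card U) + (\<Sum>v\<in>U. real (degU v))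
     + 2 * (\<Sum>w\<in>W. real (degU w)) + (\<Sum>w\<in>W. real (degW w))"
proof -
  have sym': "\<And>a b. E a b \<Longrightarrow> E b a" using sym .
  have "2 * num_edges V E = (\<Sum>v\<in>V. card (nbhd V E v))"
    using two_num_edges_eq_sum_degrees[OF simple, of V] unfolding nbhd_def by simp
  then have "2 * real (num_edges V E) = (\<Sum>v\<in>V. real (card (nbhd V E v)))"
    by (metis of_nat_mult of_nat_numeral of_nat_sum)
  also have "\<dots> = real (card U) + (\<Sum>v\<in>U. 1 + real (degU v) + real (degW v))
      + (\<Sum>w\<in>W. real (degU w) + real (degW w))"
    using sum_V_split[of "\<lambda>v. real (card (nbhd V E v))"] degree_U_vertex degree_W_vertex
    by (simp add: U_def[symmetric] add.assoc)
  finally have "2 * real (num_edges V E) = real (card U) + (\<Sum>v\<in>U. 1 + real (degU v) + real (degW v))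
      + (\<Sum>w\<in>W. real (degU w) + real (degW w))" .
  moreover have "(\<Sum>v\<in>U. real (degW v)) = (\<Sum>w\<in>W. real (degU w))"
    unfolding nbW_def degW_def degU_def nbU_def
    using sum_nbhd_swap[OF finite_U finite_W sym', where f = "\<lambda>_. 1"] by simp
  ultimately show ?thesis by (simp add: sum.distrib)
qed

lemma two_num_edges_W: "2 * real (num_edges W E) = (\<Sum>w\<in>W. real (degW w))"
proof -
  have "2 * num_edges W E = (\<Sum>w\<in>W. degW w)"
    using two_num_edges_eq_sum_degrees[OF simple W_subset] unfolding degW_def nbW_def by simp
  then show ?thesis by (metis of_nat_mult of_nat_numeral of_nat_sum)
qed

lemma sq_minus_eigenvalue_eq:
  "r * r - r = real (num_edges V E) - real (num_edges W E) - (\<Sum>v\<in>U. deficit y v)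
     - (\<Sum>w\<in>W. cost w)"
proof -
  have "(\<Sum>v\<in>U. deficit y v) = (\<Sum>v\<in>U. real (degU v)) / 2 - (\<Sum>v\<in>U. real (degU v) * y v) + r"
    unfolding deficit_def eigenvalue_eq_sum_U
    by (simp add: sum.distrib sum_subtractf sum_divide_distrib algebra_simps)
  moreover have "(\<Sum>w\<in>W. cost w) = (\<Sum>w\<in>W. real (degU w)) - (\<Sum>w\<in>W. real (degU w) * y w)"
    unfolding cost_def by (simp add: sum_subtractf algebra_simps)
  ultimately show ?thesis using sq_eigenvalue_eq two_num_edges_eq two_num_edges_W by argo
qed

end

section \<open>Edges inside \<open>W\<close>\<close>

lemma W_edge_one_end_attached_impossible:
  fixes r s D \<tau> a b S :: real
  assumes r: "3 < r" and s: "0 \<le> s" and D: "0 \<le> D" and \<tau>: "3 * \<tau> = r + D - s"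
    and small: "s + D + (1 - a) < 1/2"
    and eigen: "r * a = S + b" "r * b = a" and S: "S \<le> \<tau> + s"
  shows False
proof -
  have rr: "3 * r < r * r" using mult_strict_right_mono[OF r, of r] r by simp
  then have "9 < r * r" using r by linarith
  note rr = rr this
  have "r * (r * a) = r * S + r * b" using eigen(1) by (simp add: distrib_left)
  then have "a * (r * r - 1) = r * S" using eigen(2) by (simp add: algebra_simps)
  also have "\<dots> \<le> r * (\<tau> + s)" using S r by simp
  finally have "3 * (a * (r * r - 1)) \<le> r * (3 * \<tau> + 3 * s)" by (simp add: algebra_simps)
  also have "\<dots> = r * (r + D + 2 * s)" using \<tau> by simp
  moreover have "(1/2 + s + D) * (r * r - 1) < a * (r * r - 1)"
    using small rr by (intro mult_strict_right_mono) auto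
  ultimately have "3 * ((1/2 + s + D) * (r * r - 1)) - r * (r + D + 2 * s) < 0" by linarith
  moreover have "3 * ((1/2 + s + D) * (r * r - 1)) - r * (r + D + 2 * s)
      = (r * r / 2 - 3/2) + s * (3 * (r * r) - 3 - 2 * r) + D * (3 * (r * r) - 3 - r)"
    by (simp add: field_simps)
  moreover have "0 \<le> s * (3 * (r * r) - 3 - 2 * r)" "0 \<le> D * (3 * (r * r) - 3 - r)"
    using s D rr r by (intro mult_nonneg_nonneg; linarith)+
  ultimately show False using rr by linarith
qed

lemma W_edge_both_ends_attached_impossible:
  fixes r s D \<tau> a b S\<^sub>1 S\<^sub>2 :: real
  assumes r: "3 < r" and s: "0 \<le> s" and D: "0 \<le> D" and \<tau>: "3 * \<tau> = r + D - s"
    and small: "s + D + (1 - a) + (1 - b) < 1/2"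
    and eigen: "r * a = S\<^sub>1 + b" "r * b = S\<^sub>2 + a" and S: "S\<^sub>1 \<le> \<tau> + s" "S\<^sub>2 \<le> \<tau> + s"
  shows False
proof -
  have "(r - 1) * (a + b) = S\<^sub>1 + S\<^sub>2" using eigen by (simp add: algebra_simps)
  moreover have "(r - 1) * (3/2 + s + D) < (r - 1) * (a + b)"
    using small r by (intro mult_strict_left_mono) auto
  ultimately have "3 * ((r - 1) * (3/2 + s + D)) - 2 * (r + D + 2 * s) < 0" using S \<tau> by argo
  moreover have "3 * ((r - 1) * (3/2 + s + D)) - 2 * (r + D + 2 * s)
      = (5/2 * r - 9/2) + s * (3 * r - 7) + D * (3 * r - 5)"
    by (simp add: field_simps)
  moreover have "0 \<le> s * (3 * r - 7)" "0 \<le> D * (3 * r - 5)"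
    using s D r by (intro mult_nonneg_nonneg; linarith)+
  ultimately show False using r by linarith
qed

context hub_eigenvector
begin

lemma cost_nonneg: "w \<in> W \<Longrightarrow> 0 \<le> cost w"
  unfolding cost_def using le_one W_subset by auto

lemma cost_ge_if_attached:
  assumes "w \<in> W" and "nbU w \<noteq> {}"
  shows "1 - y w \<le> cost w"
proof -
  have "1 \<le> degU w" using assms(2) finite_nbU unfolding degU_def by (simp add: Suc_le_eq card_gt_0_iff)
  moreover have "0 \<le> 1 - y w" using le_one assms(1) W_subset by auto
  ultimately have "1 * (1 - y w) \<le> real (degU w) * (1 - y w)" by (intro mult_right_mono) auto
  then show ?thesis unfolding cost_def by simp
qed

lemma W_edge_forces_small_deficit:
  assumes "real (num_edges V E) - 3/2 < r * r - r" and "num_edges W E \<noteq> 0"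
  shows "num_edges W E = 1" and "(\<Sum>v\<in>U. deficit y v) + (\<Sum>w\<in>W. cost w) < 1/2"
proof -
  have "0 \<le> (\<Sum>v\<in>U. deficit y v)" using sum_deficit_nonneg y_bounds U_subset by blast
  moreover have "0 \<le> (\<Sum>w\<in>W. cost w)" using cost_nonneg by (simp add: sum_nonneg)
  moreover have "real (num_edges W E) + (\<Sum>v\<in>U. deficit y v) + (\<Sum>w\<in>W. cost w) < 3/2"
    using sq_minus_eigenvalue_eq assms(1) by argo
  ultimately have "real (num_edges W E) < 2" by linarith
  then show "num_edges W E = 1" using assms(2) by simp
  with \<open>real (num_edges W E) + _ + _ < 3/2\<close>
  show "(\<Sum>v\<in>U. deficit y v) + (\<Sum>w\<in>W. cost w) < 1/2" by simp
qed

lemma eigen_W_edge_end: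
  assumes "w \<in> W" and "nbW w = {w'}"
  shows "r * y w = (\<Sum>z\<in>nbU w. y z) + y w'"
proof -
  have "w' \<notin> nbU w" using assms(2) nbU_nbW_disjoint(1) by auto
  have "r * y w = (\<Sum>z\<in>nbhd V E w. y z)" using eigen assms(1) W_subset by auto
  also have "\<dots> = (\<Sum>z\<in>insert w' (nbU w). y z)" using nbhd_W_vertex[OF assms(1)] assms(2) by simp
  also have "\<dots> = (\<Sum>z\<in>nbU w. y z) + y w'" using finite_nbU \<open>w' \<notin> nbU w\<close> by simp
  finally show ?thesis .
qed

lemma sum_nbU_W_vertex_le:
  assumes "U = isolU \<union> triU" and "w \<in> W"
  shows "(\<Sum>z\<in>nbU w. y z) \<le> real (card triU) / 3 + (\<Sum>v\<in>isolU. y v)"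
proof -
  have fin: "finite isolU" "finite triU" unfolding isolU_def triU_def using finite_U by auto
  have triU_sub: "triU \<subseteq> U" unfolding triU_def by auto
  have "nbU w = (nbU w \<inter> isolU) \<union> (nbU w \<inter> triU)" using nbU_subset assms(1) by auto
  moreover have "(nbU w \<inter> isolU) \<inter> (nbU w \<inter> triU) = {}" using isolU_triU_disjoint by auto
  ultimately have "(\<Sum>z\<in>nbU w. y z) = (\<Sum>z\<in>nbU w \<inter> isolU. y z) + (\<Sum>z\<in>nbU w \<inter> triU. y z)"
    using finite_nbU by (metis finite_Int sum.union_disjoint)
  also have "(\<Sum>z\<in>nbU w \<inter> isolU. y z) \<le> (\<Sum>v\<in>isolU. y v)"
    using fin y_bounds U_subset unfolding isolU_def by (intro sum_mono2) auto
  also have "(\<Sum>z\<in>nbU w \<inter> triU. y z) \<le> (\<Sum>z\<in>nbU w \<inter> triU. 1)"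
    using y_bounds U_subset triU_sub by (intro sum_mono) auto
  also have "nbU w \<inter> triU = {v\<in>triU. E w v}" using triU_sub unfolding nbU_def by auto
  then have "(\<Sum>z\<in>nbU w \<inter> triU. 1) = real (card {v\<in>triU. E w v})" by simp
  also have "\<dots> \<le> real (card triU) / 3"
    using card_triangle_nbrs_of_outside_vertex[of w] W_outside[OF assms(2)] by simp
  finally show ?thesis by simp
qed

lemma W_edge_with_attached_end_impossible:
  assumes r: "3 < r" and small: "(\<Sum>v\<in>U. deficit y v) + (\<Sum>w\<in>W. cost w) < 1/2"
    and w: "w\<^sub>1 \<in> W" "w\<^sub>2 \<in> W" "nbW w\<^sub>1 = {w\<^sub>2}" "nbW w\<^sub>2 = {w\<^sub>1}" and attached: "nbU w\<^sub>1 \<noteq> {}"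
  shows False
proof -
  define s where "s = (\<Sum>v\<in>isolU. y v)"
  define D where "D = (\<Sum>v\<in>triU. 1 - y v)"
  define \<tau> where "\<tau> = real (card triU) / 3"
  have y01: "\<And>v. v \<in> U \<Longrightarrow> 0 \<le> y v \<and> y v \<le> 1" using y_bounds U_subset by blast
  have "0 \<le> (\<Sum>w\<in>W. cost w)" using cost_nonneg by (simp add: sum_nonneg)
  then have "(\<Sum>v\<in>U. deficit y v) < 1/2" using small by linarith
  then have U: "U = isolU \<union> triU" and deficit: "(\<Sum>v\<in>U. deficit y v) = s + D"
    using sum_deficit_lt_half y01 unfolding s_def D_def by blast+
  have nonneg: "0 \<le> s" "0 \<le> D" using sum_deficit_parts_nonneg[of y, OF y01] unfolding s_def D_def by auto
  have "r = s + (\<Sum>v\<in>triU. y v)"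
    unfolding eigenvalue_eq_sum_U s_def U using finite_U U isolU_triU_disjoint
    by (simp add: sum.union_disjoint)
  then have \<tau>: "3 * \<tau> = r + D - s" unfolding \<tau>_def D_def by (simp add: sum_subtractf)
  have "w\<^sub>2 \<in> nbW w\<^sub>1" using w(3) by simp
  then have "w\<^sub>1 \<noteq> w\<^sub>2" unfolding nbW_def using irrefl by blast
  moreover have "(\<Sum>w\<in>{w\<^sub>1, w\<^sub>2}. cost w) \<le> (\<Sum>w\<in>W. cost w)"
    using w(1,2) cost_nonneg by (intro sum_mono2[OF finite_W]) auto
  ultimately have "cost w\<^sub>1 + cost w\<^sub>2 \<le> (\<Sum>w\<in>W. cost w)" by simp
  then have small': "s + D + (1 - y w\<^sub>1) + cost w\<^sub>2 < 1/2"
    using small deficit cost_ge_if_attached[OF w(1) attached] by linarith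
  have e1: "r * y w\<^sub>1 = (\<Sum>z\<in>nbU w\<^sub>1. y z) + y w\<^sub>2" by (rule eigen_W_edge_end[OF w(1,3)])
  have e2: "r * y w\<^sub>2 = (\<Sum>z\<in>nbU w\<^sub>2. y z) + y w\<^sub>1" by (rule eigen_W_edge_end[OF w(2,4)])
  have S1: "(\<Sum>z\<in>nbU w\<^sub>1. y z) \<le> \<tau> + s"
    using sum_nbU_W_vertex_le[OF U w(1)] unfolding s_def \<tau>_def by simp
  show False
  proof (cases "nbU w\<^sub>2 = {}")
    case True
    have "s + D + (1 - y w\<^sub>1) < 1/2" using small' cost_nonneg[OF w(2)] by linarith
    moreover have "r * y w\<^sub>2 = y w\<^sub>1" using e2 True by simp
    ultimately show False by (rule W_edge_one_end_attached_impossible[OF r nonneg \<tau> _ e1 _ S1])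
  next
    case False
    have "s + D + (1 - y w\<^sub>1) + (1 - y w\<^sub>2) < 1/2"
      using small' cost_ge_if_attached[OF w(2) False] by linarith
    moreover have "(\<Sum>z\<in>nbU w\<^sub>2. y z) \<le> \<tau> + s"
      using sum_nbU_W_vertex_le[OF U w(2)] unfolding s_def \<tau>_def by simp
    ultimately show False by (rule W_edge_both_ends_attached_impossible[OF r nonneg \<tau> _ e1 e2 S1])
  qed
qed

lemma num_edges_W_eq_0:
  assumes r: "3 < r" and gap: "real (num_edges V E) - 3/2 < r * r - r"
  shows "num_edges W E = 0"
proof (rule ccontr)
  assume "num_edges W E \<noteq> 0"
  then have e1: "num_edges W E = 1" and small: "(\<Sum>v\<in>U. deficit y v) + (\<Sum>w\<in>W. cost w) < 1/2"
    using W_edge_forces_small_deficit[OF gap] by auto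
  obtain w\<^sub>1 w\<^sub>2 where w: "w\<^sub>1 \<in> W" "w\<^sub>2 \<in> W" "E w\<^sub>1 w\<^sub>2"
    "\<And>z. z \<in> W \<Longrightarrow> E w\<^sub>1 z \<Longrightarrow> z = w\<^sub>2" "\<And>z. z \<in> W \<Longrightarrow> E w\<^sub>2 z \<Longrightarrow> z = w\<^sub>1"
    by (rule num_edges_eq_1_imp_isolated_edge[OF simple e1]) blast
  have nbW: "nbW w\<^sub>1 = {w\<^sub>2}" "nbW w\<^sub>2 = {w\<^sub>1}"
    using w sym[OF w(3)] unfolding nbW_def by blast+
  show False
  proof (cases "nbU w\<^sub>1 = {} \<and> nbU w\<^sub>2 = {}")
    case True
    then have "r * y w\<^sub>1 = y w\<^sub>2" "r * y w\<^sub>2 = y w\<^sub>1"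
      using eigen_W_edge_end[OF w(1) nbW(1)] eigen_W_edge_end[OF w(2) nbW(2)] by simp_all
    then have "(r * r) * y w\<^sub>1 = 1 * y w\<^sub>1" by (metis mult.assoc mult_1)
    moreover have "0 < y w\<^sub>1" using pos w(1) W_subset by auto
    ultimately have "r * r = 1" by simp
    moreover have "3 * r < r * r" using mult_strict_right_mono[OF r, of r] r by simp
    ultimately show False using r by linarith
  next
    case False
    then consider "nbU w\<^sub>1 \<noteq> {}" | "nbU w\<^sub>2 \<noteq> {}" by blast
    then show False
    proof cases
      case 1
      then show False by (rule W_edge_with_attached_end_impossible[OF r small w(1,2) nbW])
    next
      case 2
      then show False by (rule W_edge_with_attached_end_impossible[OF r small w(2,1) nbW(2,1)])
    qed
  qed
qed

end

lemma perron_vector_normalised_at_hub: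
  assumes "simple_graph V E" "V5_free V E" "u \<in> V" and perron: "perron_vector V E x"
    and max: "\<forall>v \<in> V. x v \<le> x u"
  shows "hub_eigenvector V E u (\<lambda>v. x v / x u) (spectral_radius V E)"
proof -
  have xu: "0 < x u" using perron assms(3) unfolding perron_vector_def by blast
  show ?thesis
  proof (unfold_locales)
    fix v
    show "v \<in> V \<Longrightarrow> 0 < x v / x u" using perron xu unfolding perron_vector_def by simp
    show "v \<in> V \<Longrightarrow> x v / x u \<le> 1" using max xu by simp
    assume "v \<in> V"
    then show "(\<Sum>z\<in>nbhd V E v. x z / x u) = spectral_radius V E * (x v / x u)"
      using perron unfolding perron_vector_def by (simp add: sum_divide_distrib[symmetric])
  qed (use assms xu in simp_all)
qed

theorem mainTheorem4:
  fixes V :: "nat set" and E :: "nat \<Rightarrow> nat \<Rightarrow> bool" and m :: nat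
    and x :: "nat \<Rightarrow> real" and ustar :: nat
  assumes "m \<ge> 8"
    and "simple_graph V E" and "V5_free V E" and "no_isolated V E" and "num_edges V E = m"
    and "\<forall>V' (E' :: nat \<Rightarrow> nat \<Rightarrow> bool). simple_graph V' E' \<and> V5_free V' E' \<and>
           no_isolated V' E' \<and> num_edges V' E' = m \<longrightarrow>
           spectral_radius V' E' \<le> spectral_radius V E"
    and "perron_vector V E x"
    and "ustar \<in> V" and "\<forall>v \<in> V. x v \<le> x ustar"
    and "V - (nbhd V E ustar \<union> {ustar}) \<noteq> {}"
  shows "num_edges (V - (nbhd V E ustar \<union> {ustar})) E = 0"
proof -
  interpret hub_eigenvector V E ustar "\<lambda>v. x v / x ustar" "spectral_radius V E"
    by (rule perron_vector_normalised_at_hub[OF assms(2,3,8,7,9)])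
  have "3 < spectral_radius V E"
    using extremal_spectral_radius_gt_3[OF assms(6,1)] .
  moreover have "real (num_edges V E) - 3/2
      < spectral_radius V E * spectral_radius V E - spectral_radius V E"
    using extremal_spectral_radius_lower_bound(2)[OF assms(6)] assms(1,5) by simp
  ultimately have "num_edges W E = 0" by (rule num_edges_W_eq_0)
  then show ?thesis unfolding W_def U_def .
qed

end
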